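(* Let $A=\{a_1,\dots,a_k\}$ with $k\ge2$, $u_1,u_2:A\to\mathbb{R}$, and assume there is a unique efficient option $a^\star$, i.e. $u_1(a^\star)+u_2(a^\star)>u_1(a)+u_2(a)$ for all $a\ne a^\star$. Then there exists $\bar\varepsilon>0$ such that for every $\varepsilon\in(0,\bar\varepsilon)$: an $\varepsilon$-robust subgame-perfect Nash equilibrium of the two-player Price \& Choose game exists, and the outcome of every $\varepsilon$-robust subgame-perfect Nash equilibrium is $a^\star$.
   Context: Quasi-linear Price \& Choose game: $P=\{p\in\mathbb{R}^k:\sum_j p_j=0\}$; player 1 chooses $p\in P$; then player 2, having observed $p$, chooses $a_j\in A$ and pays $p_j$ to player 1; payoffs $g_1(p,a_j)=u_1(a_j)+p_j$, $g_2(p,a_j)=u_2(a_j)-p_j$. Strategy profiles are $\sigma=(\sigma_1,\sigma_2)$ with $\sigma_1\in P$, $\sigma_2:P\to A$. For $\varepsilon>0$ and $p\in P$, let $\beta_2^\varepsilon(p)=\{a\in A: g_2(p,a)+\varepsilon\ge g_2(p,a')\text{ for all }a'\in A\}$ (the $\varepsilon$-maximizers of player 2). The profile $\sigma$ is an $\varepsilon$-robust subgame-perfect Nash equilibrium if (1) for every $p\in P$, $\sigma_2(p)\in\arg\min\{g_1(p,a):a\in\beta_2^\varepsilon(p)\}$, and (2) $g_1(\sigma_1,\sigma_2(\sigma_1))+\varepsilon\ge g_1(p',\sigma_2(p'))$ for all $p'\in P$. Its outcome is $\sigma_2(\sigma_1)$. *)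

theory Defs
  imports Complex_Main "HOL-Library.Cardinality"
begin

text \<open>Options form a finite type 'a (the set A); prices are vectors indexed by A summing to 0.\<close>

definition price_set :: "('a::finite \<Rightarrow> real) set" where
  "price_set = {p. (\<Sum>j\<in>UNIV. p j) = 0}"

definition g1 :: "('a \<Rightarrow> real) \<Rightarrow> ('a \<Rightarrow> real) \<Rightarrow> 'a \<Rightarrow> real" where
  "g1 u1 p a = u1 a + p a"

definition g2 :: "('a \<Rightarrow> real) \<Rightarrow> ('a \<Rightarrow> real) \<Rightarrow> 'a \<Rightarrow> real" where
  "g2 u2 p a = u2 a - p a"

definition beta2 :: "('a \<Rightarrow> real) \<Rightarrow> real \<Rightarrow> ('a \<Rightarrow> real) \<Rightarrow> 'a set" where
  "beta2 u2 eps p = {a. \<forall>a'. g2 u2 p a + eps \<ge> g2 u2 p a'}"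

definition robust_spne ::
  "('a::finite \<Rightarrow> real) \<Rightarrow> ('a \<Rightarrow> real) \<Rightarrow> real \<Rightarrow> ('a \<Rightarrow> real) \<Rightarrow> (('a \<Rightarrow> real) \<Rightarrow> 'a) \<Rightarrow> bool" where
  "robust_spne u1 u2 eps \<sigma>1 \<sigma>2 \<longleftrightarrow>
     \<sigma>1 \<in> price_set \<and>
     (\<forall>p\<in>price_set. is_arg_min (g1 u1 p) (\<lambda>a. a \<in> beta2 u2 eps p) (\<sigma>2 p)) \<and>
     (\<forall>p'\<in>price_set. g1 u1 \<sigma>1 (\<sigma>2 \<sigma>1) + eps \<ge> g1 u1 p' (\<sigma>2 p'))"

end

theory Submission
  imports Defs
begin

text \<open>Because prices sum to zero, the average of player 2's payoffs is always
  C/k with C = \<Sum>u2 and k = |A|, so the maximum of player 2's payoff is at least C/k.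
  Player 1 collects W(a) - g2(p,a) with W = u1 + u2, and player 2 may answer with an
  exact maximizer, so player 1 never obtains more than max W - C/k; the response actually
  chosen is \<epsilon>-optimal for player 2, so it yields at most W(a) - C/k + \<epsilon>.
  Conversely, a price making player 2 indifferent among all options except a*, which is
  better by slightly more than \<epsilon>, forces a* and gives player 1 exactly W(a*) - C/k - \<epsilon>.
  Hence every equilibrium outcome a satisfies W(a*) - W(a) \<le> 3\<epsilon>, which for small \<epsilon>
  leaves only a*.\<close>

lemma ex_max_ge_average:
  fixes f :: "'a::finite \<Rightarrow> real"
  shows "\<exists>b. (\<forall>a. f a \<le> f b) \<and> sum f UNIV / real CARD('a) \<le> f b"
proof -
  obtain b where b: "f b = Max (range f)"
    using Max_in[of "range f"] by fastforce
  then have max: "\<forall>a. f a \<le> f b"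
    by simp
  have "sum f UNIV \<le> real CARD('a) * f b"
    using sum_bounded_above[of UNIV f "f b"] max by simp
  then have "sum f UNIV / real CARD('a) \<le> f b"
    by (simp add: divide_le_eq mult.commute)
  with max show ?thesis
    by blast
qed

lemma sum_g2_price_set:
  assumes "p \<in> price_set"
  shows "sum (g2 u2 p) UNIV = sum u2 UNIV"
  using assms by (simp add: g2_def sum_subtractf price_set_def)

lemma ex_max_g2_ge_average:
  fixes u2 :: "'a::finite \<Rightarrow> real"
  assumes "p \<in> price_set"
  shows "\<exists>b. (\<forall>a. g2 u2 p a \<le> g2 u2 p b) \<and> sum u2 UNIV / real CARD('a) \<le> g2 u2 p b"
  using ex_max_ge_average[of "g2 u2 p"] sum_g2_price_set[OF assms] by simp

lemma best_response_in_beta2: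
  assumes "0 \<le> eps" "\<forall>a. g2 u2 p a \<le> g2 u2 p b"
  shows "b \<in> beta2 u2 eps p"
  unfolding beta2_def
proof (intro CollectI allI)
  fix a'
  show "g2 u2 p a' \<le> g2 u2 p b + eps"
    using assms(1) assms(2)[rule_format, of a'] by linarith
qed

lemma ex_robust_response:
  fixes u1 u2 :: "'a::finite \<Rightarrow> real"
  assumes "0 \<le> eps"
  shows "\<exists>\<sigma>2. \<forall>p. is_arg_min (g1 u1 p) (\<lambda>a. a \<in> beta2 u2 eps p) (\<sigma>2 p)"
proof -
  have "beta2 u2 eps p \<noteq> {}" for p
  proof -
    obtain b where "\<forall>a. g2 u2 p a \<le> g2 u2 p b"
      using ex_max_ge_average[of "g2 u2 p"] by blast
    then have "b \<in> beta2 u2 eps p"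
      by (rule best_response_in_beta2[OF assms])
    then show ?thesis
      by blast
  qed
  then have "\<exists>x. is_arg_min (g1 u1 p) (\<lambda>a. a \<in> beta2 u2 eps p) x" for p
    by (intro ex_is_arg_min_if_finite) simp_all
  then show ?thesis
    by (rule choice[OF allI])
qed

lemma g1_robust_response_le_max_welfare:
  fixes u1 u2 :: "'a::finite \<Rightarrow> real"
  assumes "p \<in> price_set" "0 \<le> eps"
    and "\<And>a. u1 a + u2 a \<le> w"
    and "is_arg_min (g1 u1 p) (\<lambda>a. a \<in> beta2 u2 eps p) x"
  shows "g1 u1 p x \<le> w - sum u2 UNIV / real CARD('a)"
proof -
  obtain b where b: "\<forall>a. g2 u2 p a \<le> g2 u2 p b" "sum u2 UNIV / real CARD('a) \<le> g2 u2 p b"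
    using ex_max_g2_ge_average[OF assms(1)] by blast
  have "g1 u1 p x \<le> g1 u1 p b"
    using assms(4) best_response_in_beta2[OF assms(2) b(1)] unfolding is_arg_min_def by force
  also have "\<dots> = u1 b + u2 b - g2 u2 p b"
    by (simp add: g1_def g2_def)
  also have "\<dots> \<le> w - sum u2 UNIV / real CARD('a)"
    using assms(3)[of b] b(2) by linarith
  finally show ?thesis .
qed

lemma g1_robust_response_le_welfare:
  fixes u1 u2 :: "'a::finite \<Rightarrow> real"
  assumes "p \<in> price_set"
    and "is_arg_min (g1 u1 p) (\<lambda>a. a \<in> beta2 u2 eps p) x"
  shows "g1 u1 p x \<le> u1 x + u2 x - sum u2 UNIV / real CARD('a) + eps"
proof -
  obtain b where b: "\<forall>a. g2 u2 p a \<le> g2 u2 p b" "sum u2 UNIV / real CARD('a) \<le> g2 u2 p b"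
    using ex_max_g2_ge_average[OF assms(1)] by blast
  have "g2 u2 p b \<le> g2 u2 p x + eps"
    using assms(2) unfolding is_arg_min_def beta2_def by blast
  with b(2) show ?thesis
    by (simp add: g1_def g2_def)
qed

text \<open>Player 1's equilibrium price: player 2 is indifferent among all options except \<open>astar\<close>,
  which pays e more.\<close>

definition bonus_price :: "('a::finite \<Rightarrow> real) \<Rightarrow> 'a \<Rightarrow> real \<Rightarrow> 'a \<Rightarrow> real" where
  "bonus_price u2 astar e b =
     u2 b - (sum u2 UNIV - e) / real CARD('a) - (if b = astar then e else 0)"

lemma bonus_price_in_price_set:
  fixes u2 :: "'a::finite \<Rightarrow> real"
  shows "bonus_price u2 astar e \<in> price_set"
  by (simp add: price_set_def bonus_price_def sum_subtractf sum.If_cases)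

lemma g2_bonus_price:
  fixes u2 :: "'a::finite \<Rightarrow> real"
  shows "g2 u2 (bonus_price u2 astar e) b =
     (sum u2 UNIV - e) / real CARD('a) + (if b = astar then e else 0)"
  by (simp add: g2_def bonus_price_def)

lemma beta2_bonus_price:
  fixes u2 :: "'a::finite \<Rightarrow> real"
  assumes "0 \<le> eps" "eps < e"
  shows "beta2 u2 eps (bonus_price u2 astar e) = {astar}"
  using assms by (auto simp: beta2_def g2_bonus_price split: if_splits)

lemma g1_bonus_price:
  fixes u2 :: "'a::finite \<Rightarrow> real"
  shows "g1 u1 (bonus_price u2 astar e) astar =
     u1 astar + u2 astar - sum u2 UNIV / real CARD('a)
       - e * (real CARD('a) - 1) / real CARD('a)"
  by (simp add: g1_def bonus_price_def diff_divide_distrib right_diff_distrib)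

lemma robust_response_bonus_price:
  fixes u2 :: "'a::finite \<Rightarrow> real"
  assumes "0 \<le> eps" "eps < e"
    and "is_arg_min (g1 u1 (bonus_price u2 astar e)) (\<lambda>a. a \<in> beta2 u2 eps (bonus_price u2 astar e)) x"
  shows "x = astar"
  using assms unfolding is_arg_min_def beta2_bonus_price[OF assms(1,2)] by simp

text \<open>With the bonus e = \<epsilon>k/(k-1), player 1 forgoes exactly \<epsilon>; this needs k \<ge> 2.\<close>

lemma robust_response_exact_bonus_price:
  fixes u1 u2 :: "'a::finite \<Rightarrow> real" and eps :: real
  defines "e \<equiv> eps * real CARD('a) / (real CARD('a) - 1)"
  assumes "CARD('a) \<ge> 2" "0 < eps"
    and "is_arg_min (g1 u1 (bonus_price u2 astar e)) (\<lambda>a. a \<in> beta2 u2 eps (bonus_price u2 astar e)) x"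
  shows "x = astar"
    and "g1 u1 (bonus_price u2 astar e) x = u1 astar + u2 astar - sum u2 UNIV / real CARD('a) - eps"
proof -
  have "eps < e"
    unfolding e_def using assms(2,3) by (simp add: field_simps)
  then show "x = astar"
    using robust_response_bonus_price[OF _ _ assms(4)] assms(3) by simp
  then show "g1 u1 (bonus_price u2 astar e) x = u1 astar + u2 astar - sum u2 UNIV / real CARD('a) - eps"
    unfolding e_def using assms(2) by (simp add: g1_bonus_price)
qed

lemma robust_spne_exists:
  fixes u1 u2 :: "'a::finite \<Rightarrow> real"
  assumes "CARD('a) \<ge> 2" "0 < eps"
    and efficient: "\<And>a. u1 a + u2 a \<le> u1 astar + u2 astar"
  shows "\<exists>\<sigma>1 \<sigma>2. robust_spne u1 u2 eps \<sigma>1 \<sigma>2"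
proof -
  define p where "p = bonus_price u2 astar (eps * real CARD('a) / (real CARD('a) - 1))"
  obtain \<sigma>2 where \<sigma>2: "\<And>p. is_arg_min (g1 u1 p) (\<lambda>a. a \<in> beta2 u2 eps p) (\<sigma>2 p)"
    using ex_robust_response[of eps u1 u2] assms(2) by auto
  have "g1 u1 p (\<sigma>2 p) + eps = u1 astar + u2 astar - sum u2 UNIV / real CARD('a)"
    using robust_response_exact_bonus_price(2)[OF assms(1,2) \<sigma>2] unfolding p_def by simp
  moreover have "g1 u1 p' (\<sigma>2 p') \<le> u1 astar + u2 astar - sum u2 UNIV / real CARD('a)"
    if "p' \<in> price_set" for p'
    using g1_robust_response_le_max_welfare[OF that _ efficient \<sigma>2] assms(2) by simp
  ultimately have "robust_spne u1 u2 eps p \<sigma>2"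
    unfolding robust_spne_def p_def using bonus_price_in_price_set \<sigma>2 by fastforce
  then show ?thesis
    by blast
qed

lemma robust_spne_outcome_nearly_efficient:
  fixes u1 u2 :: "'a::finite \<Rightarrow> real"
  assumes "CARD('a) \<ge> 2" "0 < eps"
    and "robust_spne u1 u2 eps \<sigma>1 \<sigma>2"
  shows "u1 astar + u2 astar \<le> u1 (\<sigma>2 \<sigma>1) + u2 (\<sigma>2 \<sigma>1) + 3 * eps"
proof -
  define p where "p = bonus_price u2 astar (eps * real CARD('a) / (real CARD('a) - 1))"
  have \<sigma>1: "\<sigma>1 \<in> price_set"
    and \<sigma>2: "\<And>p. p \<in> price_set \<Longrightarrow> is_arg_min (g1 u1 p) (\<lambda>a. a \<in> beta2 u2 eps p) (\<sigma>2 p)"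
    and optimal: "g1 u1 p (\<sigma>2 p) \<le> g1 u1 \<sigma>1 (\<sigma>2 \<sigma>1) + eps"
    using assms(3) bonus_price_in_price_set unfolding robust_spne_def p_def by blast+
  have "g1 u1 p (\<sigma>2 p) = u1 astar + u2 astar - sum u2 UNIV / real CARD('a) - eps"
    using robust_response_exact_bonus_price(2)[OF assms(1,2) \<sigma>2[OF bonus_price_in_price_set]]
    unfolding p_def by simp
  with optimal have "u1 astar + u2 astar - sum u2 UNIV / real CARD('a) - 2 * eps \<le> g1 u1 \<sigma>1 (\<sigma>2 \<sigma>1)"
    by simp
  moreover have "g1 u1 \<sigma>1 (\<sigma>2 \<sigma>1) \<le> u1 (\<sigma>2 \<sigma>1) + u2 (\<sigma>2 \<sigma>1) - sum u2 UNIV / real CARD('a) + eps"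
    using g1_robust_response_le_welfare[OF \<sigma>1 \<sigma>2[OF \<sigma>1]] .
  ultimately show ?thesis
    by linarith
qed

lemma ex_positive_gap_to_strict_max:
  fixes f :: "'a::finite \<Rightarrow> real"
  assumes "\<forall>a. a \<noteq> x \<longrightarrow> f a < f x"
  shows "\<exists>d>0. \<forall>a. a \<noteq> x \<longrightarrow> f a + d \<le> f x"
proof -
  define d where "d = Min (insert 1 ((\<lambda>a. f x - f a) ` {a. a \<noteq> x}))"
  have "d > 0"
    using assms unfolding d_def by auto
  moreover have "f a + d \<le> f x" if "a \<noteq> x" for a
  proof -
    have "d \<le> f x - f a"
      unfolding d_def using that by (intro Min_le) auto
    then show ?thesis
      by simp
  qed
  ultimately show ?thesis
    by blast
qed

theorem proposition4:
  fixes u1 u2 :: "'a::finite \<Rightarrow> real" and astar :: 'a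
  assumes "CARD('a) \<ge> 2"
    and "\<forall>a. a \<noteq> astar \<longrightarrow> u1 astar + u2 astar > u1 a + u2 a"
  shows "\<exists>eb>0. \<forall>eps. 0 < eps \<and> eps < eb \<longrightarrow>
           (\<exists>\<sigma>1 \<sigma>2. robust_spne u1 u2 eps \<sigma>1 \<sigma>2) \<and>
           (\<forall>\<sigma>1 \<sigma>2. robust_spne u1 u2 eps \<sigma>1 \<sigma>2 \<longrightarrow> \<sigma>2 \<sigma>1 = astar)"
proof -
  obtain d where "d > 0" and gap: "\<And>a. a \<noteq> astar \<Longrightarrow> u1 a + u2 a + d \<le> u1 astar + u2 astar"
    using ex_positive_gap_to_strict_max[of astar "\<lambda>a. u1 a + u2 a"] assms(2) by blast
  have efficient: "u1 a + u2 a \<le> u1 astar + u2 astar" for a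
    using assms(2) by (cases "a = astar") (auto intro: less_imp_le)
  show ?thesis
  proof (intro exI[of _ "d / 3"] conjI allI impI)
    fix eps :: real
    assume eps: "0 < eps \<and> eps < d / 3"
    show "\<exists>\<sigma>1 \<sigma>2. robust_spne u1 u2 eps \<sigma>1 \<sigma>2"
      using robust_spne_exists[OF assms(1), where eps = eps and astar = astar] efficient eps
      by blast
    show "\<sigma>2 \<sigma>1 = astar" if "robust_spne u1 u2 eps \<sigma>1 \<sigma>2" for \<sigma>1 \<sigma>2
    proof (rule ccontr)
      assume "\<sigma>2 \<sigma>1 \<noteq> astar"
      then have "u1 (\<sigma>2 \<sigma>1) + u2 (\<sigma>2 \<sigma>1) + d \<le> u1 astar + u2 astar"
        by (rule gap)
      moreover have "u1 astar + u2 astar \<le> u1 (\<sigma>2 \<sigma>1) + u2 (\<sigma>2 \<sigma>1) + 3 * eps"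
        by (rule robust_spne_outcome_nearly_efficient[OF assms(1) _ that]) (use eps in simp)
      ultimately show False
        using eps by linarith
    qed
  qed (use \<open>d > 0\<close> in simp)
qed

end
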